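(* Let $\omega\in\mathbb{C}$ and let $\{P_n\}_{n\geqslant0}$ be a $D_\omega$-classical monic OPS with recurrence $P_{n+2}=(x-\beta_{n+1})P_{n+1}-\gamma_{n+1}P_n$ ($n\geqslant0$), $P_1=x-\beta_0$, $P_0=1$, and let $Q_n:=(n+1)^{-1}D_\omega P_{n+1}$, which is a monic OPS with recurrence $Q_{n+2}=(x-\tilde\beta_{n+1})Q_{n+1}-\tilde\gamma_{n+1}Q_n$ ($n\geqslant0$), $Q_1=x-\tilde\beta_0$, $Q_0=1$. Put $\tilde\alpha^1_n:=(n+1)(\beta_{n+1}-\tilde\beta_n-\omega)$ and $\tilde\alpha^0_n:=(n+1)\gamma_{n+2}-(n+2)\tilde\gamma_{n+1}$ for $n\geqslant0$, so that $P_{n+2}=Q_{n+2}+\tilde\alpha^1_{n+1}Q_{n+1}+\tilde\alpha^0_nQ_n$ ($n\geqslant0$) and $P_1=Q_1+\tilde\alpha^1_0$. Suppose $\Phi(x)=a_2x^2+a_1x+a_0$ is a polynomial of degree at most two and $\alpha^2_{n+2},\alpha^1_{n+1},\alpha^0_n$ ($n\geqslant0$) are complex numbers with $\alpha^0_n\neq0$ such that $$\Phi(x)Q_n(x)=\alpha^2_{n+2}P_{n+2}(x)+\alpha^1_{n+1}P_{n+1}(x)+\alpha^0_nP_n(x),\quad n\geqslant0.$$ Then, with the convention $\tilde\gamma_0:=0$, $$\alpha^2_{n+2}=a_2\ (n\geqslant0),\qquad \alpha^1_{n+1}+a_2\tilde\alpha^1_{n+1}=a_2(\tilde\beta_{n+1}+\tilde\beta_n)+a_1\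 (n\geqslant0),$$ $$\alpha^1_{n+1}\tilde\alpha^1_n+a_2\tilde\alpha^0_n+\alpha^0_n=a_2(\tilde\gamma_{n+1}+\tilde\gamma_n+\tilde\beta_n^2)+a_1\tilde\beta_n+a_0\ (n\geqslant0),$$ $$\alpha^1_{n+1}\tilde\alpha^0_{n-1}+\alpha^0_n\tilde\alpha^1_{n-1}=a_2\tilde\gamma_n(\tilde\beta_n+\tilde\beta_{n-1})+a_1\tilde\gamma_n\ (n\geqslant1),$$ $$\alpha^0_{n+1}\tilde\alpha^0_{n-1}=a_2\tilde\gamma_{n+1}\tilde\gamma_n\ (n\geqslant1).$$
   Context: For $\omega\neq0$, $(D_\omega f)(x)=\frac{f(x+\omega)-f(x)}{\omega}$ on complex polynomials; $D_0=d/dx$. A monic OPS is a sequence of monic polynomials $P_n$, $\deg P_n=n$, with a linear functional $u$ such that $\langle u,P_nP_m\rangle=k_n\delta_{nm}$, $k_n\neq0$; such a sequence satisfies a three-term recurrence with $\gamma_n\neq0$. An OPS $\{P_n\}$ is $D_\omega$-classical if $\{(n+1)^{-1}D_\omega P_{n+1}\}_{n\geqslant0}$ is also an OPS; in that case a relation of the displayed form $\Phi Q_n=\alpha^2_{n+2}P_{n+2}+\alpha^1_{n+1}P_{n+1}+\alpha^0_nP_n$ with $\deg\Phi\leqslant2$ exists (first structure relation). *)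

theory Defs
  imports "HOL-Computational_Algebra.Polynomial"
begin

definition Dw :: "complex \<Rightarrow> complex poly \<Rightarrow> complex poly" where
  "Dw \<omega> f = (if \<omega> = 0 then pderiv f
              else smult (1 / \<omega>) (pcompose f [:\<omega>, 1:] - f))"

definition lin_functional :: "(complex poly \<Rightarrow> complex) \<Rightarrow> bool" where
  "lin_functional u \<longleftrightarrow> (\<forall>p q. u (p + q) = u p + u q) \<and> (\<forall>c p. u (smult c p) = c * u p)"

definition monic_OPS :: "(nat \<Rightarrow> complex poly) \<Rightarrow> bool" where
  "monic_OPS P \<longleftrightarrow> (\<forall>n. degree (P n) = n \<and> lead_coeff (P n) = 1) \<and>
     (\<exists>u k. lin_functional u \<and> (\<forall>n. k n \<noteq> 0) \<and>
        (\<forall>n m. u (P n * P m) = (if n = m then k n else 0)))"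

definition Dseq :: "complex \<Rightarrow> (nat \<Rightarrow> complex poly) \<Rightarrow> nat \<Rightarrow> complex poly" where
  "Dseq \<omega> P n = smult (1 / of_nat (n + 1)) (Dw \<omega> (P (n + 1)))"

definition Dw_classical :: "complex \<Rightarrow> (nat \<Rightarrow> complex poly) \<Rightarrow> bool" where
  "Dw_classical \<omega> P \<longleftrightarrow> monic_OPS P \<and> monic_OPS (Dseq \<omega> P)"

definition talpha1 :: "complex \<Rightarrow> (nat \<Rightarrow> complex) \<Rightarrow> (nat \<Rightarrow> complex) \<Rightarrow> nat \<Rightarrow> complex" where
  "talpha1 \<omega> \<beta> t\<beta> n = of_nat (n + 1) * (\<beta> (n + 1) - t\<beta> n - \<omega>)"

definition talpha0 :: "(nat \<Rightarrow> complex) \<Rightarrow> (nat \<Rightarrow> complex) \<Rightarrow> nat \<Rightarrow> complex" where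
  "talpha0 \<gamma> t\<gamma> n = of_nat (n + 1) * \<gamma> (n + 2) - of_nat (n + 2) * t\<gamma> (n + 1)"

definition gamma0conv :: "(nat \<Rightarrow> complex) \<Rightarrow> nat \<Rightarrow> complex" where
  "gamma0conv t\<gamma> n = (if n = 0 then 0 else t\<gamma> n)"

end

theory Submission
  imports Defs
begin

(* Orthogonality makes {Q_n} a basis with coordinate functionals C_j p = u(p Q_j) / k_j.
   Applying D_omega to the recurrence of P, with the product rule
   D_omega ((x - c) p) = (x - c + omega) D_omega p + p, gives the banded expansion
   P_{n+2} = Q_{n+2} + ~alpha^1_{n+1} Q_{n+1} + ~alpha^0_n Q_n, and two uses of the
   recurrence x Q_m = Q_{m+1} + ~beta_m Q_m + ~gamma_m Q_{m-1} expand Phi Q_n in the same basis.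
   The five identities are the coefficients of Q_{n+2}, ..., Q_{n-2} in the structure relation. *)

lemma Dw_smult: "Dw \<omega> (smult c p) = smult c (Dw \<omega> p)"
  by (simp add: Dw_def pderiv_smult pcompose_smult smult_diff_right)

lemma Dw_diff: "Dw \<omega> (p - q) = Dw \<omega> p - Dw \<omega> q"
  by (simp add: Dw_def pderiv_diff pcompose_diff smult_diff_right)

lemma Dw_1: "Dw \<omega> 1 = 0"
  by (simp add: Dw_def pcompose_1)

lemma Dw_linear_mult: "Dw \<omega> ([:c, 1:] * p) = [:c + \<omega>, 1:] * Dw \<omega> p + p"
proof (cases "\<omega> = 0")
  case True
  have "pderiv [:c, 1:] = 1" by (simp add: pderiv_pCons)
  then have "pderiv ([:c, 1:] * p) = [:c, 1:] * pderiv p + p"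
    by (simp only: pderiv_mult) simp
  with True show ?thesis by (simp only: Dw_def if_True) simp
next
  case False
  define r where "r = pcompose p [:\<omega>, 1:]"
  have "pcompose ([:c, 1:] * p) [:\<omega>, 1:] = [:c + \<omega>, 1:] * r"
    unfolding r_def by (simp only: pcompose_mult) (simp add: pcompose_pCons)
  moreover have "[:c + \<omega>, 1:] * r - [:c, 1:] * p
      = [:c + \<omega>, 1:] * (r - p) + ([:c + \<omega>, 1:] - [:c, 1:]) * p"
    by algebra
  ultimately show ?thesis
    using False by (simp add: Dw_def r_def smult_add_right)
qed

lemma Dw_Suc_eq_Dseq: "Dw \<omega> (P (Suc n)) = smult (of_nat (Suc n)) (Dseq \<omega> P n)"
  by (simp add: Dseq_def del: of_nat_Suc)

lemma Dseq_expansion: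
  fixes \<omega> :: complex and P Q :: "nat \<Rightarrow> complex poly"
  assumes Q: "Q = Dseq \<omega> P"
    and recP: "\<And>n. P (n + 2) = [:- \<beta> (n + 1), 1:] * P (n + 1) - smult (\<gamma> (n + 1)) (P n)"
    and recQ: "\<And>n. Q (n + 2) = [:- t\<beta> (n + 1), 1:] * Q (n + 1) - smult (t\<gamma> (n + 1)) (Q n)"
  shows "P (n + 2) = Q (n + 2) + smult (talpha1 \<omega> \<beta> t\<beta> (n + 1)) (Q (n + 1))
    + smult (talpha0 \<gamma> t\<gamma> n) (Q n)"
proof -
  let ?c = "\<omega> - \<beta> (n + 2)"
  have "Dw \<omega> (P (Suc (Suc (Suc n)))) = [:?c, 1:] * Dw \<omega> (P (Suc (Suc n))) + P (n + 2)
      - smult (\<gamma> (n + 2)) (Dw \<omega> (P (Suc n)))"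
    using recP[of "n + 1"] by (simp add: Dw_diff Dw_smult Dw_linear_mult del: mult_pCons_left)
  then have Dw_rec: "smult (of_nat (n + 3)) (Q (n + 2)) = smult (of_nat (n + 2)) ([:?c, 1:] * Q (n + 1))
      + P (n + 2) - smult (\<gamma> (n + 2) * of_nat (n + 1)) (Q n)"
    by (simp only: Dw_Suc_eq_Dseq Q) (simp add: numeral_eq_Suc del: mult_pCons_left)
  have "[:?c, 1:] * Q (n + 1) = [:0, 1:] * Q (n + 1) + smult ?c (Q (n + 1))"
    by (simp add: algebra_simps)
  also have "[:0, 1:] * Q (n + 1) = Q (n + 2) + smult (t\<beta> (n + 1)) (Q (n + 1)) + smult (t\<gamma> (n + 1)) (Q n)"
    using recQ[of n] by (simp add: algebra_simps)
  finally have x_mult: "[:?c, 1:] * Q (n + 1)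
      = Q (n + 2) + smult (t\<beta> (n + 1) + ?c) (Q (n + 1)) + smult (t\<gamma> (n + 1)) (Q n)"
    by (simp add: smult_add_left)
  from Dw_rec have "P (n + 2) = smult (of_nat (n + 3)) (Q (n + 2)) - smult (of_nat (n + 2)) ([:?c, 1:] * Q (n + 1))
      + smult (\<gamma> (n + 2) * of_nat (n + 1)) (Q n)"
    by algebra
  also have "\<dots> = Q (n + 2) + smult (talpha1 \<omega> \<beta> t\<beta> (n + 1)) (Q (n + 1)) + smult (talpha0 \<gamma> t\<gamma> n) (Q n)"
    unfolding x_mult by (simp add: poly_eq_iff talpha1_def talpha0_def algebra_simps)
  finally show ?thesis .
qed

lemma Dseq_expansion_1:
  fixes \<omega> :: complex and P Q :: "nat \<Rightarrow> complex poly"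
  assumes Q: "Q = Dseq \<omega> P"
    and recP: "\<And>n. P (n + 2) = [:- \<beta> (n + 1), 1:] * P (n + 1) - smult (\<gamma> (n + 1)) (P n)"
    and P1: "P 1 = [:- \<beta> 0, 1:]" and P0: "P 0 = 1"
    and Q1: "Q 1 = [:- t\<beta> 0, 1:]" and Q0: "Q 0 = 1"
  shows "P 1 = Q 1 + smult (talpha1 \<omega> \<beta> t\<beta> 0) (Q 0)"
proof -
  have "Dw \<omega> (P (Suc (Suc 0))) = [:\<omega> - \<beta> 1, 1:] * Dw \<omega> (P (Suc 0)) + P 1 - smult (\<gamma> 1) (Dw \<omega> (P 0))"
    using recP[of 0] by (simp add: Dw_diff Dw_smult Dw_linear_mult del: mult_pCons_left)
  then have "smult 2 (Q 1) = [:\<omega> - \<beta> 1, 1:] + P 1"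
    using P0 Q0 by (simp add: Dw_Suc_eq_Dseq Dw_1 Q del: mult_pCons_left)
  then have "2 * t\<beta> 0 = \<beta> 1 + \<beta> 0 - \<omega>"
    using P1 Q1 by (simp add: algebra_simps)
  then show ?thesis
    using P1 Q1 Q0 by (simp add: talpha1_def)
qed

lemma x_mult_three_term:
  fixes Q :: "nat \<Rightarrow> complex poly"
  assumes rec: "\<And>n. Q (n + 2) = [:- b (n + 1), 1:] * Q (n + 1) - smult (c (n + 1)) (Q n)"
    and Q1: "Q 1 = [:- b 0, 1:]" and Q0: "Q 0 = 1"
  shows "[:0, 1:] * Q n = Q (Suc n) + smult (b n) (Q n) + smult (gamma0conv c n) (Q (n - 1))"
proof (cases n)
  case 0
  then show ?thesis using Q1 Q0 by (simp add: gamma0conv_def)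
next
  case (Suc m)
  then show ?thesis using rec[of m] by (simp add: gamma0conv_def algebra_simps split: if_splits)
qed

lemma quadratic_mult_three_term:
  fixes Q :: "nat \<Rightarrow> 'a::comm_ring_1 poly"
  assumes x_mult: "\<And>m. [:0, 1:] * Q m = Q (Suc m) + smult (b m) (Q m) + smult (g m) (Q (m - 1))"
    and g0: "g 0 = 0"
  shows "[:a0, a1, a2:] * Q n = smult a2 (Q (n + 2)) + smult (a1 + a2 * (b (n + 1) + b n)) (Q (n + 1))
    + smult (a0 + a1 * b n + a2 * (g (n + 1) + g n + (b n)\<^sup>2)) (Q n)
    + smult (g n * (a1 + a2 * (b n + b (n - 1)))) (Q (n - 1))
    + smult (a2 * g n * g (n - 1)) (Q (n - 2))"
proof -
  let ?x = "[:0, 1:] :: 'a poly"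
  have "[:a0, a1, a2:] * Q n = smult a0 (Q n) + smult a1 (?x * Q n) + smult a2 (?x * (?x * Q n))"
    by (simp add: algebra_simps)
  also have "?x * (?x * Q n) = ?x * Q (Suc n) + smult (b n) (?x * Q n) + smult (g n) (?x * Q (n - 1))"
    by (simp only: x_mult distrib_left mult_smult_right)
  finally show ?thesis
    using g0 by (cases n) (simp_all only: x_mult, simp_all add: poly_eq_iff algebra_simps power2_eq_square)
qed

definition coordinate_functionals :: "(nat \<Rightarrow> 'a poly) \<Rightarrow> (nat \<Rightarrow> 'a poly \<Rightarrow> 'a::comm_ring_1) \<Rightarrow> bool" where
  "coordinate_functionals Q C \<longleftrightarrow>
     (\<forall>j p q. C j (p + q) = C j p + C j q) \<and> (\<forall>j c p. C j (smult c p) = c * C j p) \<and>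
     (\<forall>i j. C j (Q i) = (if i = j then 1 else 0))"

lemma coordinate_functionalsD:
  assumes "coordinate_functionals Q C"
  shows "C j (p + q) = C j p + C j q" "C j (smult c p) = c * C j p"
    "C j (Q i) = (if i = j then 1 else 0)"
  using assms by (simp_all add: coordinate_functionals_def)

lemma monic_OPS_coordinate_functionals:
  assumes "monic_OPS Q"
  obtains C where "coordinate_functionals Q C"
proof -
  obtain u k where u: "lin_functional u" and k: "\<And>n. k n \<noteq> 0"
    and orth: "\<And>n m. u (Q n * Q m) = (if n = m then k n else 0)"
    using assms unfolding monic_OPS_def by blast
  have "coordinate_functionals Q (\<lambda>j p. u (p * Q j) / k j)"
    using u k unfolding coordinate_functionals_def lin_functional_def
    by (simp add: orth distrib_right add_divide_distrib)
  then show ?thesis by (rule that)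
qed

lemma coordinate_functionals_banded:
  assumes C: "coordinate_functionals Q C"
    and R0: "R 0 = Q 0" and R1: "R 1 = Q 1 + smult (s 0) (Q 0)"
    and R: "\<And>n. R (n + 2) = Q (n + 2) + smult (s (n + 1)) (Q (n + 1)) + smult (t n) (Q n)"
  shows "C j (R m) = (if m = j then 1 else 0) + (if m = j + 1 then s j else 0)
    + (if m = j + 2 then t j else 0)"
proof (cases m)
  case 0
  then show ?thesis using R0 by (simp add: coordinate_functionalsD[OF C])
next
  case (Suc k)
  then show ?thesis
    using R1 R[of "k - 1"] by (cases k) (auto simp add: coordinate_functionalsD[OF C])
qed

lemma gamma0conv_0: "gamma0conv c 0 = 0"
  by (simp add: gamma0conv_def)

lemma coordinate_functionals_Dseq:
  fixes \<omega> :: complex and P Q :: "nat \<Rightarrow> complex poly"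
  assumes C: "coordinate_functionals Q C" and Q: "Q = Dseq \<omega> P"
    and recP: "\<And>n. P (n + 2) = [:- \<beta> (n + 1), 1:] * P (n + 1) - smult (\<gamma> (n + 1)) (P n)"
    and P1: "P 1 = [:- \<beta> 0, 1:]" and P0: "P 0 = 1"
    and recQ: "\<And>n. Q (n + 2) = [:- t\<beta> (n + 1), 1:] * Q (n + 1) - smult (t\<gamma> (n + 1)) (Q n)"
    and Q1: "Q 1 = [:- t\<beta> 0, 1:]" and Q0: "Q 0 = 1"
  shows "C j (P m) = (if m = j then 1 else 0) + (if m = j + 1 then talpha1 \<omega> \<beta> t\<beta> j else 0)
    + (if m = j + 2 then talpha0 \<gamma> t\<gamma> j else 0)"
proof -
  have "P 1 = Q 1 + smult (talpha1 \<omega> \<beta> t\<beta> 0) (Q 0)"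
    using Q recP P1 P0 Q1 Q0 by (rule Dseq_expansion_1)
  moreover have "P (n + 2) = Q (n + 2) + smult (talpha1 \<omega> \<beta> t\<beta> (n + 1)) (Q (n + 1))
      + smult (talpha0 \<gamma> t\<gamma> n) (Q n)" for n
    using Q recP recQ by (rule Dseq_expansion)
  ultimately show ?thesis
    using C P0 Q0 by (intro coordinate_functionals_banded) simp_all
qed

theorem proposition2p1:
  fixes \<omega> :: complex and P :: "nat \<Rightarrow> complex poly"
    and \<beta> \<gamma> t\<beta> t\<gamma> :: "nat \<Rightarrow> complex"
    and a2 a1 a0 :: complex and \<alpha>2 \<alpha>1 \<alpha>0 :: "nat \<Rightarrow> complex"
  defines "Q \<equiv> Dseq \<omega> P"
  assumes classical: "Dw_classical \<omega> P"
    and recP: "\<And>n. P (n + 2) = [:- \<beta> (n + 1), 1:] * P (n + 1) - smult (\<gamma> (n + 1)) (P n)"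
    and P1: "P 1 = [:- \<beta> 0, 1:]" and P0: "P 0 = 1"
    and recQ: "\<And>n. Q (n + 2) = [:- t\<beta> (n + 1), 1:] * Q (n + 1) - smult (t\<gamma> (n + 1)) (Q n)"
    and Q1: "Q 1 = [:- t\<beta> 0, 1:]" and Q0: "Q 0 = 1"
    and nz: "\<And>n. \<alpha>0 n \<noteq> 0"
    and struct: "\<And>n. [:a0, a1, a2:] * Q n =
        smult (\<alpha>2 (n + 2)) (P (n + 2)) + smult (\<alpha>1 (n + 1)) (P (n + 1)) + smult (\<alpha>0 n) (P n)"
  shows "(\<forall>n. \<alpha>2 (n + 2) = a2)
    \<and> (\<forall>n. \<alpha>1 (n + 1) + a2 * talpha1 \<omega> \<beta> t\<beta> (n + 1) = a2 * (t\<beta> (n + 1) + t\<beta> n) + a1)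
    \<and> (\<forall>n. \<alpha>1 (n + 1) * talpha1 \<omega> \<beta> t\<beta> n + a2 * talpha0 \<gamma> t\<gamma> n + \<alpha>0 n
           = a2 * (gamma0conv t\<gamma> (n + 1) + gamma0conv t\<gamma> n + (t\<beta> n)\<^sup>2) + a1 * t\<beta> n + a0)
    \<and> (\<forall>n\<ge>1. \<alpha>1 (n + 1) * talpha0 \<gamma> t\<gamma> (n - 1) + \<alpha>0 n * talpha1 \<omega> \<beta> t\<beta> (n - 1)
           = a2 * t\<gamma> n * (t\<beta> n + t\<beta> (n - 1)) + a1 * t\<gamma> n)
    \<and> (\<forall>n\<ge>1. \<alpha>0 (n + 1) * talpha0 \<gamma> t\<gamma> (n - 1) = a2 * t\<gamma> (n + 1) * t\<gamma> n)"
proof -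
  have "monic_OPS Q"
    using classical by (simp add: Dw_classical_def Q_def)
  then obtain C where C: "coordinate_functionals Q C"
    by (rule monic_OPS_coordinate_functionals)
  have coord_P: "C j (P m) = (if m = j then 1 else 0) + (if m = j + 1 then talpha1 \<omega> \<beta> t\<beta> j else 0)
      + (if m = j + 2 then talpha0 \<gamma> t\<gamma> j else 0)" for j m
    using C meta_eq_to_obj_eq[OF Q_def] recP P1 P0 recQ Q1 Q0 by (rule coordinate_functionals_Dseq)
  have "[:0, 1:] * Q m = Q (Suc m) + smult (t\<beta> m) (Q m) + smult (gamma0conv t\<gamma> m) (Q (m - 1))" for m
    using recQ Q1 Q0 by (rule x_mult_three_term)
  note PhiQ = quadratic_mult_three_term[OF this gamma0conv_0]
  have "C j ([:a0, a1, a2:] * Q n)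
      = \<alpha>2 (n + 2) * C j (P (n + 2)) + \<alpha>1 (n + 1) * C j (P (n + 1)) + \<alpha>0 n * C j (P n)" for j n
    by (simp only: struct coordinate_functionalsD[OF C])
  note compare = this[unfolded PhiQ coord_P coordinate_functionalsD[OF C]]
  have top: "\<alpha>2 (n + 2) = a2" for n
    using compare[where j = "n + 2" and n = n] by (simp split: if_splits)
  moreover have "\<alpha>1 (n + 1) + a2 * talpha1 \<omega> \<beta> t\<beta> (n + 1) = a2 * (t\<beta> (n + 1) + t\<beta> n) + a1" for n
    using compare[where j = "n + 1" and n = n] top[of n] by (simp add: algebra_simps split: if_splits)
  moreover have "\<alpha>1 (n + 1) * talpha1 \<omega> \<beta> t\<beta> n + a2 * talpha0 \<gamma> t\<gamma> n + \<alpha>0 n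
      = a2 * (gamma0conv t\<gamma> (n + 1) + gamma0conv t\<gamma> n + (t\<beta> n)\<^sup>2) + a1 * t\<beta> n + a0" for n
    using compare[where j = n and n = n] top[of n]
    by (simp add: gamma0conv_def algebra_simps split: if_splits)
  moreover have "\<alpha>1 (n + 1) * talpha0 \<gamma> t\<gamma> (n - 1) + \<alpha>0 n * talpha1 \<omega> \<beta> t\<beta> (n - 1)
      = a2 * t\<gamma> n * (t\<beta> n + t\<beta> (n - 1)) + a1 * t\<gamma> n" if "n \<ge> 1" for n
    using compare[where j = "n - 1" and n = n] top[of n] that
    by (simp add: gamma0conv_def algebra_simps split: if_splits)
  moreover have "\<alpha>0 (n + 1) * talpha0 \<gamma> t\<gamma> (n - 1) = a2 * t\<gamma> (n + 1) * t\<gamma> n" if "n \<ge> 1" for n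
    using compare[where j = "n - 1" and n = "n + 1"] that by (simp add: gamma0conv_def split: if_splits)
  ultimately show ?thesis
    by blast
qed

end
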